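(* Let $d\ge 2$. Let $A'_1,A'_2,A_1,A_2,\tilde A,B$ be quantum systems, each with Hilbert space $\mathbb{C}^d$, and let $\psi^+_{XY}$ denote the maximally entangled state $|\psi^+\rangle\langle\psi^+|$, $|\psi^+\rangle=\frac1{\sqrt d}\sum_{i=0}^{d-1}|ii\rangle$, on two such systems. Let $\rho_{\tilde AB}$ be an arbitrary state on $\tilde A B$, let $\{M^{(i)}\}_{i=1}^K$ (any $K\ge1$) be a POVM on $A_1A_2\tilde A$, and for each $i$ and $j\in\{1,2\}$ let $U^{(i,j)}_B$ be a unitary on $B$. Set $\Omega=\psi^+_{A'_1A_1}\otimes\psi^+_{A'_2A_2}\otimes\rho_{\tilde AB}$ and $$P_{\mathrm{succ}}=\frac12\sum_{j=1}^{2}\sum_{i=1}^{K}\operatorname{tr}\Big[\psi^+_{A'_jB}\,U^{(i,j)}_B\,\operatorname{tr}_{A_1A_2\tilde A A'_{\bar j}}\big[(M^{(i)}\otimes\mathbf 1)\,\Omega\big]\,U^{(i,j)\dagger}_B\Big],$$ where $\bar j$ denotes the index in $\{1,2\}$ different from $j$. Then $$P_{\mathrm{succ}}\le\frac{d+1}{2d}.$$ In particular, for $d=2$, $P_{\mathrm{succ}}\le 3/4$.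
   Context: This models the symmetric constrained-entanglement quantum random access code: Alice holds two $d$-dimensional inputs (purified by reference systems $A'_1,A'_2$), shares only a $d\times d$ state with Bob, may send unlimited classical communication (the outcome $i$ of her measurement), and Bob, depending on his uniformly random choice $j\in\{1,2\}$ and on $i$, applies a unitary aiming to reproduce input $j$; $P_{\mathrm{succ}}$ is the average entanglement fidelity of $B$ with $A'_j$. *)

theory Defs
  imports "HOL-Analysis.Analysis" "HOL-Library.Complex_Order" "HOL-Library.FuncSet"
begin

text \<open>Each quantum system has Hilbert space C^d with
 computational basis indexed by 0..d-1.  A basis vector of a set S of systems is a
 configuration f in PiE S (%_. {..<d}); an operator on S is given by its matrix
 entries X f g (only configurations in cfgs d S matter).\<close>

datatype sys = Ap1 | Ap2 | A1 | A2 | At | B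

type_synonym qop = "(sys \<Rightarrow> nat) \<Rightarrow> (sys \<Rightarrow> nat) \<Rightarrow> complex"

definition cfgs :: "nat \<Rightarrow> sys set \<Rightarrow> (sys \<Rightarrow> nat) set" where
  "cfgs d S = PiE S (\<lambda>_. {..<d})"

definition ident :: qop where
  "ident f g = (if f = g then 1 else 0)"

definition tensor :: "sys set \<Rightarrow> sys set \<Rightarrow> qop \<Rightarrow> qop \<Rightarrow> qop" where
  "tensor S T X Y = (\<lambda>f g. X (restrict f S) (restrict g S) * Y (restrict f T) (restrict g T))"

definition mult :: "nat \<Rightarrow> sys set \<Rightarrow> qop \<Rightarrow> qop \<Rightarrow> qop" where
  "mult d S X Y = (\<lambda>f g. \<Sum>h\<in>cfgs d S. X f h * Y h g)"

definition adj :: "qop \<Rightarrow> qop" where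
  "adj X = (\<lambda>f g. cnj (X g f))"

definition qtrace :: "nat \<Rightarrow> sys set \<Rightarrow> qop \<Rightarrow> complex" where
  "qtrace d S X = (\<Sum>f\<in>cfgs d S. X f f)"

definition ptrace :: "nat \<Rightarrow> sys set \<Rightarrow> qop \<Rightarrow> qop" where
  "ptrace d T X = (\<lambda>f g. \<Sum>h\<in>cfgs d T.
      X (\<lambda>x. if x \<in> T then h x else f x) (\<lambda>x. if x \<in> T then h x else g x))"

definition positive :: "nat \<Rightarrow> sys set \<Rightarrow> qop \<Rightarrow> bool" where
  "positive d S X \<longleftrightarrow>
     (\<forall>v :: (sys \<Rightarrow> nat) \<Rightarrow> complex.
        0 \<le> (\<Sum>f\<in>cfgs d S. \<Sum>g\<in>cfgs d S. cnj (v f) * X f g * v g))"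

definition density :: "nat \<Rightarrow> sys set \<Rightarrow> qop \<Rightarrow> bool" where
  "density d S X \<longleftrightarrow> positive d S X \<and> qtrace d S X = 1"

definition unitary_op :: "nat \<Rightarrow> sys set \<Rightarrow> qop \<Rightarrow> bool" where
  "unitary_op d S U \<longleftrightarrow>
     (\<forall>f\<in>cfgs d S. \<forall>g\<in>cfgs d S.
        mult d S U (adj U) f g = ident f g \<and> mult d S (adj U) U f g = ident f g)"

definition povm :: "nat \<Rightarrow> sys set \<Rightarrow> nat \<Rightarrow> (nat \<Rightarrow> qop) \<Rightarrow> bool" where
  "povm d S K M \<longleftrightarrow> (\<forall>i\<in>{1..K}. positive d S (M i)) \<and>
     (\<forall>f\<in>cfgs d S. \<forall>g\<in>cfgs d S. (\<Sum>i=1..K. M i f g) = ident f g)"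

text \<open>maximally entangled state |psi+><psi+| on systems X, Y,
  |psi+> = 1/sqrt d * sum_i |ii>\<close>
definition psi_plus :: "nat \<Rightarrow> sys \<Rightarrow> sys \<Rightarrow> qop" where
  "psi_plus d X Y = (\<lambda>f g. if f X = f Y \<and> g X = g Y then 1 / of_nat d else 0)"

definition Aprime :: "nat \<Rightarrow> sys" where
  "Aprime j = (if j = 1 then Ap1 else Ap2)"

definition Aprime_bar :: "nat \<Rightarrow> sys" where
  "Aprime_bar j = (if j = 1 then Ap2 else Ap1)"

definition Omega :: "nat \<Rightarrow> qop \<Rightarrow> qop" where
  "Omega d \<rho> = tensor {Ap1, A1, Ap2, A2} {At, B}
      (tensor {Ap1, A1} {Ap2, A2} (psi_plus d Ap1 A1) (psi_plus d Ap2 A2)) \<rho>"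

definition reduced :: "nat \<Rightarrow> qop \<Rightarrow> qop \<Rightarrow> nat \<Rightarrow> qop" where
  "reduced d \<rho> Mi j = ptrace d {A1, A2, At, Aprime_bar j}
      (mult d UNIV (tensor {A1, A2, At} {Ap1, Ap2, B} Mi ident) (Omega d \<rho>))"

definition P_succ :: "nat \<Rightarrow> qop \<Rightarrow> nat \<Rightarrow> (nat \<Rightarrow> qop) \<Rightarrow> (nat \<Rightarrow> nat \<Rightarrow> qop) \<Rightarrow> complex" where
  "P_succ d \<rho> K M U = 1/2 * (\<Sum>j\<in>{1,2::nat}. \<Sum>i=1..K.
      (let S = {Aprime j, B};
           UB = tensor {Aprime j} {B} ident (U i j)
       in qtrace d S (mult d S (psi_plus d (Aprime j) B)
             (mult d S (mult d S UB (reduced d \<rho> (M i) j)) (adj UB)))))"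

end

theory Submission
  imports Defs
begin

text \<open>In coordinates, \<open>P_succ = (2d\<^sup>3)\<^sup>-\<^sup>1 \<Sigma>\<^sub>i (F\<^sub>1(i) + F\<^sub>2(i))\<close>.  Take Gram decompositions
  \<open>M\<^sub>i = \<Sigma>\<^sub>n |u\<^sub>n\<rangle>\<langle>u\<^sub>n|\<close> and \<open>\<rho> = \<Sigma>\<^sub>m |\<phi>\<^sub>m\<rangle>\<langle>\<phi>\<^sub>m|\<close> and let \<open>c = (\<langle>u\<^sub>n| \<otimes> 1)|\<phi>\<^sub>m\<rangle>\<close>, an unnormalised
  post-measurement vector on \<open>A1 A2 B\<close>.  Then \<open>F\<^sub>j(i) = d \<Sigma>\<^sub>n\<^sub>m \<langle>c|P\<^sub>j|c\<rangle>\<close>, where \<open>P\<^sub>1\<close> and \<open>P\<^sub>2\<close> project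
  onto \<open>(U \<otimes> 1)|\<psi>\<^sup>+\<rangle>\<close> on \<open>A1 B\<close> tensored with all of \<open>A2\<close>, resp. \<open>(U' \<otimes> 1)|\<psi>\<^sup>+\<rangle>\<close> on \<open>A2 B\<close>
  tensored with all of \<open>A1\<close>.  Such a pair of projectors satisfies \<open>\<parallel>P\<^sub>1 + P\<^sub>2\<parallel> \<le> 1 + 1/d\<close>, hence
  \<open>F\<^sub>1(i) + F\<^sub>2(i) \<le> (d + 1) \<Sigma>\<^sub>n\<^sub>m \<parallel>c\<parallel>\<^sup>2\<close>, and summing over \<open>i\<close> the completeness of the POVM turns
  \<open>\<Sigma> \<parallel>c\<parallel>\<^sup>2\<close> into \<open>d\<^sup>2 tr \<rho> = d\<^sup>2\<close>.\<close>

section \<open>Positive semidefinite kernels on finite sets\<close>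

definition quad_form :: "'a set \<Rightarrow> ('a \<Rightarrow> 'a \<Rightarrow> complex) \<Rightarrow> ('a \<Rightarrow> complex) \<Rightarrow> complex" where
  "quad_form I A v = (\<Sum>f\<in>I. \<Sum>g\<in>I. cnj (v f) * A f g * v g)"

definition psd_on :: "'a set \<Rightarrow> ('a \<Rightarrow> 'a \<Rightarrow> complex) \<Rightarrow> bool" where
  "psd_on I A \<longleftrightarrow> (\<forall>v. 0 \<le> quad_form I A v)"

lemma positive_iff_psd_on: "positive d S X \<longleftrightarrow> psd_on (cfgs d S) X"
  by (simp add: positive_def psd_on_def quad_form_def)

lemma quad_form_supported:
  assumes "finite I" "J \<subseteq> I" "\<And>x. x \<notin> J \<Longrightarrow> v x = 0"
  shows "quad_form I A v = quad_form J A v"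
proof -
  have "quad_form I A v = (\<Sum>f\<in>J. \<Sum>g\<in>I. cnj (v f) * A f g * v g)"
    unfolding quad_form_def by (rule sum.mono_neutral_right) (use assms in \<open>auto intro: finite_subset\<close>)
  also have "\<dots> = quad_form J A v"
    unfolding quad_form_def
    by (rule sum.cong[OF refl], rule sum.mono_neutral_right) (use assms in \<open>auto intro: finite_subset\<close>)
  finally show ?thesis .
qed

lemma psd_on_diag_nonneg:
  assumes "finite I" "psd_on I A" "f \<in> I"
  shows "0 \<le> A f f"
proof -
  let ?e = "\<lambda>x. if x = f then 1 else 0"
  have "quad_form I A ?e = quad_form {f} A ?e"
    by (rule quad_form_supported) (use assms in auto)
  moreover have "0 \<le> quad_form I A ?e"
    using assms(2) unfolding psd_on_def by blast
  ultimately show ?thesis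
    by (simp add: quad_form_def)
qed

lemma psd_on_subset:
  assumes "finite I" "J \<subseteq> I" "psd_on I A"
  shows "psd_on J A"
  unfolding psd_on_def
proof
  fix v :: "'a \<Rightarrow> complex"
  let ?v = "\<lambda>x. if x \<in> J then v x else 0"
  have "quad_form J A v = quad_form J A ?v"
    unfolding quad_form_def by (intro sum.cong) auto
  also have "\<dots> = quad_form I A ?v"
    by (rule quad_form_supported[symmetric]) (use assms in auto)
  finally show "0 \<le> quad_form J A v"
    using assms(3) by (simp add: psd_on_def)
qed

lemma psd_on_hermitian:
  assumes "finite I" "psd_on I A" "f \<in> I" "g \<in> I"
  shows "A g f = cnj (A f g)"
proof (cases "f = g")
  case True
  then show ?thesis
    using psd_on_diag_nonneg[OF assms(1-3)] by (simp add: less_eq_complex_def complex_eq_iff)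
next
  case False
  have form2: "quad_form I A (\<lambda>x. if x = f then 1 else if x = g then z else 0)
      = A f f + A f g * z + cnj z * A g f + cnj z * A g g * z" for z
  proof -
    have "quad_form I A (\<lambda>x. if x = f then 1 else if x = g then z else 0)
        = quad_form {f, g} A (\<lambda>x. if x = f then 1 else if x = g then z else 0)"
      by (rule quad_form_supported) (use assms in auto)
    then show ?thesis
      using False by (simp add: quad_form_def algebra_simps)
  qed
  have nonneg: "0 \<le> quad_form I A v" for v
    using assms(2) by (simp add: psd_on_def)
  have "0 \<le> A f f + A f g + A g f + A g g"
    using nonneg[of "\<lambda>x. if x = f then 1 else if x = g then 1 else 0"] unfolding form2 by simp
  moreover have "0 \<le> A f f + A f g * \<i> - \<i> * A g f + A g g"
    using nonneg[of "\<lambda>x. if x = f then 1 else if x = g then \<i> else 0"] unfolding form2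
    by (simp add: algebra_simps)
  moreover have "0 \<le> A f f" "0 \<le> A g g"
    using psd_on_diag_nonneg[OF assms(1,2)] assms(3,4) by auto
  ultimately show ?thesis
    by (auto simp: less_eq_complex_def complex_eq_iff)
qed

lemma psd_on_zero_diag_row:
  assumes "finite I" "psd_on I A" "p \<in> I" "g \<in> I" "A p p = 0"
  shows "A p g = 0"
proof (rule ccontr)
  assume nz: "A p g \<noteq> 0"
  then have "p \<noteq> g" using assms(5) by auto
  define z where "z = A p g"
  define t where "t = (Re (A g g) + 1) / (2 * (cmod z)^2)"
  define v where "v = (\<lambda>x. if x = p then - (of_real t * z) else if x = g then 1 else (0::complex))"
  have "cmod z > 0" using nz z_def by simp
  have "quad_form I A v = quad_form {p, g} A v"
    by (rule quad_form_supported) (use assms in \<open>auto simp: v_def\<close>)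
  also have "\<dots> = A g g - of_real (2 * t) * (z * cnj z)"
    using \<open>p \<noteq> g\<close> assms(5) psd_on_hermitian[OF assms(1-4)]
    by (simp add: quad_form_def v_def z_def algebra_simps)
  also have "\<dots> = A g g - of_real (Re (A g g) + 1)"
    using \<open>cmod z > 0\<close> by (simp add: t_def flip: complex_norm_square) (simp add: field_simps)
  finally have "0 \<le> A g g - of_real (Re (A g g) + 1)"
    using assms(2) by (metis psd_on_def)
  then show False
    using psd_on_diag_nonneg[OF assms(1,2,4)] by (simp add: less_eq_complex_def)
qed

lemma quad_form_insert:
  assumes "finite I" "p \<notin> I"
  shows "quad_form (insert p I) A u = cnj (u p) * A p p * u p + cnj (u p) * (\<Sum>g\<in>I. A p g * u g)
    + (\<Sum>f\<in>I. cnj (u f) * A f p) * u p + quad_form I A u"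
proof -
  have "quad_form (insert p I) A u = (\<Sum>g\<in>insert p I. cnj (u p) * A p g * u g)
      + (\<Sum>f\<in>I. \<Sum>g\<in>insert p I. cnj (u f) * A f g * u g)"
    unfolding quad_form_def using assms by simp
  also have "(\<Sum>g\<in>insert p I. cnj (u p) * A p g * u g)
      = cnj (u p) * A p p * u p + cnj (u p) * (\<Sum>g\<in>I. A p g * u g)"
    using assms by (simp add: sum_distrib_left mult.assoc)
  also have "(\<Sum>f\<in>I. \<Sum>g\<in>insert p I. cnj (u f) * A f g * u g)
      = (\<Sum>f\<in>I. cnj (u f) * A f p) * u p + quad_form I A u"
    using assms by (simp add: quad_form_def sum.distrib sum_distrib_right)
  finally show ?thesis
    by (simp add: algebra_simps)
qed

lemma quad_form_diff_rank_one:
  "quad_form I (\<lambda>f g. A f g - w f * cnj (w g)) v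
    = quad_form I A v - (\<Sum>f\<in>I. cnj (v f) * w f) * (\<Sum>g\<in>I. cnj (w g) * v g)"
  unfolding quad_form_def by (simp add: algebra_simps sum_subtractf sum_distrib_left sum_distrib_right)

lemma psd_on_schur_complement:
  assumes "finite I" "p \<notin> I" "psd_on (insert p I) A" "A p p \<noteq> 0"
  defines "w \<equiv> \<lambda>x. A x p / of_real (sqrt (Re (A p p)))"
  shows "psd_on I (\<lambda>f g. A f g - w f * cnj (w g))"
  unfolding psd_on_def
proof
  fix v :: "'a \<Rightarrow> complex"
  define a where "a = Re (A p p)"
  have "0 \<le> A p p"
    using psd_on_diag_nonneg[OF _ assms(3)] assms(1) by simp
  then have app: "A p p = of_real a" "a > 0"
    using assms(4) by (auto simp: a_def less_eq_complex_def complex_eq_iff)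
  have herm: "A f p = cnj (A p f)" if "f \<in> I" for f
    using psd_on_hermitian[OF _ assms(3), of p f] assms(1) that by simp
  define s where "s = (\<Sum>g\<in>I. A p g * v g)"
  text \<open>Extending \<open>v\<close> by the value at \<open>p\<close> that minimises the form leaves exactly the
    form of the Schur complement.\<close>
  define u where "u = (\<lambda>x. if x = p then - s / of_real a else v x)"
  have u_I: "u x = v x" if "x \<in> I" for x
    using assms(2) that by (auto simp: u_def)
  have col: "(\<Sum>f\<in>I. cnj (v f) * A f p) = cnj s"
    unfolding s_def by (auto simp: cnj_sum herm intro!: sum.cong)
  have "quad_form (insert p I) A u
      = cnj (u p) * A p p * u p + cnj (u p) * s + (\<Sum>f\<in>I. cnj (v f) * A f p) * u p
        + quad_form I A v"
  proof -
    have "quad_form I A u = quad_form I A v" "(\<Sum>g\<in>I. A p g * u g) = s"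
      "(\<Sum>f\<in>I. cnj (u f) * A f p) = (\<Sum>f\<in>I. cnj (v f) * A f p)"
      unfolding quad_form_def s_def by (simp_all add: u_I cong: sum.cong)
    then show ?thesis
      using quad_form_insert[OF assms(1,2), of A u] by simp
  qed
  also have "\<dots> = quad_form I A v - s * cnj s / of_real a"
    unfolding col app(1) using app(2) by (simp add: u_def field_simps)
  also have "\<dots> = quad_form I (\<lambda>f g. A f g - w f * cnj (w g)) v"
  proof -
    have "(\<Sum>f\<in>I. cnj (v f) * w f) = cnj s / of_real (sqrt a)"
      unfolding w_def a_def[symmetric] col[symmetric] by (simp add: sum_divide_distrib)
    moreover have "(\<Sum>g\<in>I. cnj (w g) * v g) = s / of_real (sqrt a)"
      unfolding w_def a_def[symmetric] s_def by (auto simp: sum_divide_distrib herm intro!: sum.cong)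
    moreover have "cnj s / of_real (sqrt a) * (s / of_real (sqrt a)) = s * cnj s / of_real a"
      using app(2) by (simp add: field_simps flip: of_real_mult)
    ultimately show ?thesis
      by (simp add: quad_form_diff_rank_one)
  qed
  finally show "0 \<le> quad_form I (\<lambda>f g. A f g - w f * cnj (w g)) v"
    using assms(3) by (metis psd_on_def)
qed


lemma psd_on_peel_rank_one:
  assumes "finite I" "p \<notin> I" "psd_on (insert p I) A"
  obtains w where "psd_on I (\<lambda>f g. A f g - w f * cnj (w g))"
    and "\<And>f. f \<in> insert p I \<Longrightarrow> A f p = w f * cnj (w p)"
    and "\<And>g. g \<in> insert p I \<Longrightarrow> A p g = w p * cnj (w g)"
proof (cases "A p p = 0")
  case True
  have row: "A p g = 0" if "g \<in> insert p I" for g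
    using psd_on_zero_diag_row[OF _ assms(3) _ that True] assms(1) by simp
  have "A f p = 0" if "f \<in> insert p I" for f
    using psd_on_hermitian[OF _ assms(3) _ that, of p] row[OF that] assms(1) by simp
  moreover have "psd_on I A"
    using psd_on_subset[OF _ _ assms(3)] assms(1) by blast
  ultimately show ?thesis
    using that[of "\<lambda>_. 0"] row by simp
next
  case False
  define r where "r = sqrt (Re (A p p))"
  define w where "w = (\<lambda>x. A x p / of_real r)"
  have "0 \<le> A p p"
    using psd_on_diag_nonneg[OF _ assms(3)] assms(1) by simp
  then have app: "A p p = of_real r * of_real r" and "r > 0"
    using False by (auto simp: r_def less_eq_complex_def complex_eq_iff simp flip: of_real_mult)
  have wp: "w p = of_real r"
    using \<open>r > 0\<close> by (simp add: w_def app)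
  have "psd_on I (\<lambda>f g. A f g - w f * cnj (w g))"
    using psd_on_schur_complement[OF assms False] unfolding w_def r_def .
  moreover have "A f p = w f * cnj (w p)" if "f \<in> insert p I" for f
    using \<open>r > 0\<close> unfolding wp by (simp add: w_def)
  moreover have "A p g = w p * cnj (w g)" if "g \<in> insert p I" for g
    using psd_on_hermitian[OF _ assms(3) that, of p] assms(1) \<open>r > 0\<close>
    unfolding wp by (simp add: w_def)
  ultimately show ?thesis
    by (rule that)
qed

lemma psd_on_gram_decomposition:
  assumes "finite I" "psd_on I A"
  obtains W :: "nat \<Rightarrow> 'a \<Rightarrow> complex" and n :: nat
  where "\<And>f g. f \<in> I \<Longrightarrow> g \<in> I \<Longrightarrow> A f g = (\<Sum>k<n. W k f * cnj (W k g))"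
proof -
  have "\<exists>(n::nat) W. \<forall>f\<in>I. \<forall>g\<in>I. A f g = (\<Sum>k<n. W k f * cnj (W k g))"
    using assms
  proof (induction I arbitrary: A rule: finite_induct)
    case empty
    then show ?case by simp
  next
    case (insert p I)
    obtain w where psd: "psd_on I (\<lambda>f g. A f g - w f * cnj (w g))"
      and col: "\<And>f. f \<in> insert p I \<Longrightarrow> A f p = w f * cnj (w p)"
      and row: "\<And>g. g \<in> insert p I \<Longrightarrow> A p g = w p * cnj (w g)"
      using psd_on_peel_rank_one[OF insert.hyps insert.prems] by blast
    obtain n :: nat and W where W: "\<forall>f\<in>I. \<forall>g\<in>I. A f g - w f * cnj (w g) = (\<Sum>k<n. W k f * cnj (W k g))"
      using insert.IH[OF psd] by meson
    define W' where "W' = (\<lambda>k x. if k < n then (if x = p then 0 else W k x) else w x)"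
    have "A f g = (\<Sum>k<Suc n. W' k f * cnj (W' k g))" if "f \<in> insert p I" "g \<in> insert p I" for f g
    proof -
      have "(\<Sum>k<Suc n. W' k f * cnj (W' k g))
          = (\<Sum>k<n. (if f = p then 0 else W k f) * cnj (if g = p then 0 else W k g)) + w f * cnj (w g)"
        by (simp add: W'_def)
      also have "\<dots> = A f g"
      proof (cases "f = p \<or> g = p")
        case True
        then show ?thesis
          using col[OF that(1)] row[OF that(2)] by auto
      next
        case False
        then have "A f g - w f * cnj (w g) = (\<Sum>k<n. W k f * cnj (W k g))"
          using W that by simp
        then show ?thesis
          using False by (simp add: diff_eq_eq)
      qed
      finally show ?thesis ..
    qed
    then show ?case by blast
  qed
  then obtain n :: nat and W where "\<forall>f\<in>I. \<forall>g\<in>I. A f g = (\<Sum>k<n. W k f * cnj (W k g))"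
    by meson
  then show ?thesis
    using that by blast
qed


section \<open>Overlaps with two maximally entangled subspaces\<close>

definition cinner_on :: "'a set \<Rightarrow> ('a \<Rightarrow> complex) \<Rightarrow> ('a \<Rightarrow> complex) \<Rightarrow> complex" where
  "cinner_on I u v = (\<Sum>i\<in>I. cnj (u i) * v i)"

definition cnorm2_on :: "'a set \<Rightarrow> ('a \<Rightarrow> complex) \<Rightarrow> real" where
  "cnorm2_on I u = (\<Sum>i\<in>I. (cmod (u i))\<^sup>2)"

lemma cnorm2_on_nonneg: "0 \<le> cnorm2_on I u"
  unfolding cnorm2_on_def by (simp add: sum_nonneg)

lemma of_real_cnorm2_on: "complex_of_real (cnorm2_on I u) = (\<Sum>i\<in>I. u i * cnj (u i))"
  unfolding cnorm2_on_def of_real_sum complex_norm_square ..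

lemma cinner_on_self: "cinner_on I u u = of_real (cnorm2_on I u)"
  unfolding cinner_on_def of_real_cnorm2_on by (simp add: mult.commute)

lemma cinner_on_add_left: "cinner_on I (\<lambda>i. u i + v i) w = cinner_on I u w + cinner_on I v w"
  unfolding cinner_on_def by (simp add: algebra_simps sum.distrib)

lemma cinner_on_Cauchy_Schwarz: "cmod (cinner_on I u v) \<le> sqrt (cnorm2_on I u) * sqrt (cnorm2_on I v)"
proof -
  have "cmod (cinner_on I u v) \<le> (\<Sum>i\<in>I. cmod (u i) * cmod (v i))"
    unfolding cinner_on_def by (rule order_trans[OF norm_sum]) (simp add: norm_mult)
  also have "\<dots> \<le> sqrt (cnorm2_on I u * cnorm2_on I v)"
    unfolding cnorm2_on_def by (rule real_le_rsqrt) (rule Cauchy_Schwarz_ineq_sum)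
  finally show ?thesis
    by (simp add: real_sqrt_mult)
qed

lemma cnorm2_on_add:
  "cnorm2_on I (\<lambda>i. u i + v i) = cnorm2_on I u + cnorm2_on I v + 2 * Re (cinner_on I u v)"
proof -
  have "complex_of_real (cnorm2_on I (\<lambda>i. u i + v i))
      = cinner_on I u u + cinner_on I v v + (cinner_on I u v + cnj (cinner_on I u v))"
    unfolding cinner_on_self[symmetric] cinner_on_def by (simp add: algebra_simps sum.distrib cnj_sum)
  also have "\<dots> = of_real (cnorm2_on I u + cnorm2_on I v + 2 * Re (cinner_on I u v))"
    by (simp add: cinner_on_self complex_add_cnj)
  finally show ?thesis
    using of_real_eq_iff by blast
qed

lemma overlap_le_of_cnorm2_bound:
  assumes "cinner_on I u c = of_real S" "0 \<le> S" "0 \<le> k" "cnorm2_on I u \<le> k * S"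
  shows "S \<le> k * cnorm2_on I c"
proof (cases "S = 0")
  case True
  then show ?thesis using assms(3) cnorm2_on_nonneg[of I c] by simp
next
  case False
  have "S \<le> sqrt (cnorm2_on I u) * sqrt (cnorm2_on I c)"
    using cinner_on_Cauchy_Schwarz[of I u c] assms(1,2) by simp
  also have "\<dots> \<le> sqrt (k * S) * sqrt (cnorm2_on I c)"
    using assms(4) by (intro mult_right_mono real_sqrt_le_mono) (auto simp: cnorm2_on_nonneg)
  finally have "S\<^sup>2 \<le> (sqrt (k * S * cnorm2_on I c))\<^sup>2"
    using assms(2) by (intro power_mono) (auto simp: real_sqrt_mult)
  then have "S * S \<le> (k * cnorm2_on I c) * S"
    using assms(2,3) cnorm2_on_nonneg[of I c] by (simp add: power2_eq_square mult_ac)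
  then show ?thesis
    using False assms(2) by simp
qed

lemma sum_cube_lessThan:
  "(\<Sum>p\<in>{..<d} \<times> {..<d} \<times> {..<d}. F p) = (\<Sum>a<(d::nat). \<Sum>b<d. \<Sum>c<d. F (a, b, c))"
  by (simp add: sum.cartesian_product split_def)

lemma sum_cmod_sq_orthonormal_rows:
  fixes d :: nat
  assumes "\<And>k. k < d \<Longrightarrow> (\<Sum>b<d. V k b * cnj (V k b)) = 1"
  shows "(\<Sum>k<d. \<Sum>b<d. (cmod (V k b))\<^sup>2) = real d"
proof -
  have "(\<Sum>b<d. (cmod (V k b))\<^sup>2) = 1" if "k < d" for k
    using assms[OF that] of_real_cnorm2_on[of "{..<d}" "V k"]
    unfolding cnorm2_on_def by (metis of_real_eq_1_iff)
  then show ?thesis by simp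
qed

lemma cnorm2_on_orthonormal_rows_transform:
  assumes "\<And>y y'. y < d \<Longrightarrow> y' < d \<Longrightarrow> (\<Sum>x<d. G y x * cnj (G y' x)) = (if y = y' then 1 else 0)"
  shows "cnorm2_on {..<d} (\<lambda>x. \<Sum>y<d. \<beta> y * G y x) = cnorm2_on {..<(d::nat)} \<beta>"
proof -
  have "complex_of_real (cnorm2_on {..<d} (\<lambda>x. \<Sum>y<d. \<beta> y * G y x))
      = (\<Sum>x<d. \<Sum>y<d. \<Sum>y'<d. \<beta> y * cnj (\<beta> y') * (G y x * cnj (G y' x)))"
    unfolding of_real_cnorm2_on by (simp add: sum_product cnj_sum mult_ac)
  also have "\<dots> = (\<Sum>y<d. \<Sum>y'<d. \<beta> y * cnj (\<beta> y') * (\<Sum>x<d. G y x * cnj (G y' x)))"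
    by (subst sum.swap, rule sum.cong[OF refl], subst sum.swap) (simp add: sum_distrib_left)
  also have "\<dots> = complex_of_real (cnorm2_on {..<d} \<beta>)"
    unfolding of_real_cnorm2_on by (simp add: assms if_distrib cong: if_cong)
  finally show ?thesis
    using of_real_eq_iff by blast
qed

lemma orthonormal_rows_mult_adjoint:
  fixes d :: nat
  assumes V: "\<And>k l. k < d \<Longrightarrow> l < d \<Longrightarrow> (\<Sum>b<d. V k b * cnj (V l b)) = (if k = l then 1 else 0)"
    and W: "\<And>b b'. b < d \<Longrightarrow> b' < d \<Longrightarrow> (\<Sum>x<d. cnj (W x b) * W x b') = (if b = b' then 1 else 0)"
    and "y < d" "y' < d"
  shows "(\<Sum>x<d. (\<Sum>b<d. V y b * cnj (W x b)) * cnj (\<Sum>b<d. V y' b * cnj (W x b)))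
    = (if y = y' then 1 else 0)"
proof -
  have "(\<Sum>x<d. (\<Sum>b<d. V y b * cnj (W x b)) * cnj (\<Sum>b<d. V y' b * cnj (W x b)))
      = (\<Sum>x<d. \<Sum>b<d. \<Sum>b'<d. V y b * cnj (V y' b') * (cnj (W x b) * W x b'))"
    by (simp add: sum_product cnj_sum mult_ac)
  also have "\<dots> = (\<Sum>b<d. \<Sum>b'<d. V y b * cnj (V y' b') * (\<Sum>x<d. cnj (W x b) * W x b'))"
    by (subst sum.swap, rule sum.cong[OF refl], subst sum.swap) (simp add: sum_distrib_left)
  also have "\<dots> = (\<Sum>b<d. V y b * cnj (V y' b))"
    by (simp add: W if_distrib cong: if_cong)
  also have "\<dots> = (if y = y' then 1 else 0)"
    using V assms(3,4) by simp
  finally show ?thesis .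
qed

lemma cnorm2_on_add_le:
  assumes "cnorm2_on I u = k * a" "cnorm2_on I v = k * b" "Re (cinner_on I u v) \<le> sqrt a * sqrt b"
    and "0 \<le> a" "0 \<le> b"
  shows "cnorm2_on I (\<lambda>i. u i + v i) \<le> (k + 1) * (a + b)"
proof -
  have "2 * (sqrt a * sqrt b) \<le> a + b"
    using assms(4,5) sum_squares_bound[of "sqrt a" "sqrt b"] by simp
  then show ?thesis
    unfolding cnorm2_on_add assms(1,2) using assms(3) by (simp add: algebra_simps)
qed

lemma cross_overlap_le:
  fixes V W :: "nat \<Rightarrow> nat \<Rightarrow> complex" and d :: nat
  assumes V: "\<And>k l. k < d \<Longrightarrow> l < d \<Longrightarrow> (\<Sum>b<d. V k b * cnj (V l b)) = (if k = l then 1 else 0)"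
    and W: "\<And>b b'. b < d \<Longrightarrow> b' < d \<Longrightarrow> (\<Sum>x<d. cnj (W x b) * W x b') = (if b = b' then 1 else 0)"
  shows "Re (\<Sum>y<d. \<Sum>x<d. \<Sum>b<d. cnj (\<alpha> x) * (\<beta> y * (V y b * cnj (W x b))))
    \<le> sqrt (cnorm2_on {..<d} \<alpha>) * sqrt (cnorm2_on {..<d} \<beta>)"
proof -
  define \<gamma> where "\<gamma> x = (\<Sum>y<d. \<beta> y * (\<Sum>b<d. V y b * cnj (W x b)))" for x
  have "(\<Sum>y<d. \<Sum>x<d. \<Sum>b<d. cnj (\<alpha> x) * (\<beta> y * (V y b * cnj (W x b)))) = cinner_on {..<d} \<alpha> \<gamma>"
    unfolding cinner_on_def \<gamma>_def by (subst sum.swap) (simp add: sum_distrib_left)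
  moreover have "cnorm2_on {..<d} \<gamma> = cnorm2_on {..<d} \<beta>"
    unfolding \<gamma>_def
    by (rule cnorm2_on_orthonormal_rows_transform) (rule orthonormal_rows_mult_adjoint[OF V W])
  ultimately show ?thesis
    using complex_Re_le_cmod cinner_on_Cauchy_Schwarz[of "{..<d}" \<alpha> \<gamma>] by (metis order_trans)
qed

lemma entangled_overlaps_le:
  fixes V W :: "nat \<Rightarrow> nat \<Rightarrow> complex" and c :: "nat \<Rightarrow> nat \<Rightarrow> nat \<Rightarrow> complex" and d :: nat
  assumes V: "\<And>k l. k < d \<Longrightarrow> l < d \<Longrightarrow> (\<Sum>b<d. V k b * cnj (V l b)) = (if k = l then 1 else 0)"
    and W: "\<And>b b'. b < d \<Longrightarrow> b' < d \<Longrightarrow> (\<Sum>x<d. cnj (W x b) * W x b') = (if b = b' then 1 else 0)"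
  shows "(\<Sum>x<d. (cmod (\<Sum>l<d. \<Sum>b<d. V l b * c l x b))\<^sup>2)
       + (\<Sum>x<d. (cmod (\<Sum>l<d. \<Sum>b<d. W l b * c x l b))\<^sup>2)
     \<le> (real d + 1) * (\<Sum>a1<d. \<Sum>a2<d. \<Sum>b<d. (cmod (c a1 a2 b))\<^sup>2)"
proof -
  define D3 where "D3 = {..<d} \<times> {..<d} \<times> {..<d}"
  define \<alpha> where "\<alpha> x = (\<Sum>l<d. \<Sum>b<d. V l b * c l x b)" for x
  define \<beta> where "\<beta> y = (\<Sum>l<d. \<Sum>b<d. W l b * c y l b)" for y
  define r where "r = (\<lambda>(k, x, b). \<alpha> x * cnj (V k b))"
  define q where "q = (\<lambda>(y, k, b). \<beta> y * cnj (W k b))"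
  define cc where "cc = (\<lambda>(a1, a2, b). c a1 a2 b)"
  define A where "A = cnorm2_on {..<d} \<alpha>"
  define B' where "B' = cnorm2_on {..<d} \<beta>"
  text \<open>With \<open>P\<^sub>1\<close>, \<open>P\<^sub>2\<close> the projectors onto the two maximally entangled subspaces, \<open>r = d P\<^sub>1 c\<close>,
    \<open>q = d P\<^sub>2 c\<close> and \<open>A + B' = \<langle>r + q, c\<rangle>\<close>; since \<open>\<parallel>r\<parallel>\<^sup>2 = d A\<close>, \<open>\<parallel>q\<parallel>\<^sup>2 = d B'\<close> and
    \<open>|\<langle>r, q\<rangle>| \<le> \<surd>(A B')\<close>, Cauchy--Schwarz gives \<open>A + B' \<le> (d + 1) \<parallel>c\<parallel>\<^sup>2\<close>.\<close>
  have V_norm: "(\<Sum>k<d. \<Sum>b<d. (cmod (V k b))\<^sup>2) = real d"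
    by (rule sum_cmod_sq_orthonormal_rows) (simp add: V)
  have "(\<Sum>b<d. \<Sum>k<d. (cmod (W k b))\<^sup>2) = real d"
    using sum_cmod_sq_orthonormal_rows[of d "\<lambda>b k. cnj (W k b)"] W by (simp add: mult.commute)
  then have W_norm: "(\<Sum>k<d. \<Sum>b<d. (cmod (W k b))\<^sup>2) = real d"
    by (subst sum.swap)
  have "cinner_on D3 r cc = (\<Sum>k<d. \<Sum>x<d. \<Sum>b<d. cnj (\<alpha> x) * (V k b * c k x b))"
    unfolding cinner_on_def D3_def sum_cube_lessThan by (simp add: r_def cc_def mult_ac)
  also have "\<dots> = cinner_on {..<d} \<alpha> \<alpha>"
    unfolding cinner_on_def by (subst sum.swap) (simp add: \<alpha>_def sum_distrib_left)
  finally have r_overlap: "cinner_on D3 r cc = of_real A"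
    by (simp add: cinner_on_self A_def)
  have "cinner_on D3 q cc = (\<Sum>y<d. \<Sum>k<d. \<Sum>b<d. cnj (\<beta> y) * (W k b * c y k b))"
    unfolding cinner_on_def D3_def sum_cube_lessThan by (simp add: q_def cc_def mult_ac)
  also have "\<dots> = cinner_on {..<d} \<beta> \<beta>"
    unfolding cinner_on_def by (simp add: \<beta>_def sum_distrib_left)
  finally have "cinner_on D3 q cc = of_real B'"
    by (simp add: cinner_on_self B'_def)
  with r_overlap have overlap: "cinner_on D3 (\<lambda>i. r i + q i) cc = of_real (A + B')"
    by (simp add: cinner_on_add_left)
  have "cnorm2_on D3 r = real d * A"
    unfolding cnorm2_on_def D3_def sum_cube_lessThan A_def
    by (subst sum.swap) (simp add: r_def norm_mult power_mult_distrib V_norm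
        flip: sum_distrib_left sum_distrib_right)
  moreover have "cnorm2_on D3 q = real d * B'"
    unfolding cnorm2_on_def D3_def sum_cube_lessThan B'_def
    by (simp add: q_def norm_mult power_mult_distrib W_norm
        flip: sum_distrib_left sum_distrib_right)
  moreover have "Re (cinner_on D3 r q) \<le> sqrt A * sqrt B'"
  proof -
    have "cinner_on D3 r q = (\<Sum>y<d. \<Sum>x<d. \<Sum>b<d. cnj (\<alpha> x) * (\<beta> y * (V y b * cnj (W x b))))"
      unfolding cinner_on_def D3_def sum_cube_lessThan by (simp add: r_def q_def mult_ac)
    then show ?thesis
      unfolding A_def B'_def using cross_overlap_le[OF V W] by simp
  qed
  ultimately have "cnorm2_on D3 (\<lambda>i. r i + q i) \<le> (real d + 1) * (A + B')"
    by (rule cnorm2_on_add_le) (simp_all add: A_def B'_def cnorm2_on_nonneg)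
  then have "A + B' \<le> (real d + 1) * cnorm2_on D3 cc"
    by (intro overlap_le_of_cnorm2_bound[OF overlap]) (simp_all add: A_def B'_def cnorm2_on_nonneg)
  then show ?thesis
    by (simp add: A_def B'_def cnorm2_on_def D3_def sum_cube_lessThan cc_def \<alpha>_def \<beta>_def)
qed


section \<open>Coordinates\<close>

lemma sum_cfgs_insert:
  assumes "a \<notin> S"
  shows "(\<Sum>f\<in>cfgs d (insert a S). F f) = (\<Sum>x<d. \<Sum>g\<in>cfgs d S. F (g(a := x)))"
proof -
  have "(\<Sum>f\<in>cfgs d (insert a S). F f) = (\<Sum>p\<in>{..<d} \<times> cfgs d S. F ((\<lambda>(y, g). g(a := y)) p))"
    unfolding cfgs_def PiE_insert_eq
    by (subst sum.reindex) (auto intro: inj_combinator[OF assms])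
  also have "\<dots> = (\<Sum>x<d. \<Sum>g\<in>cfgs d S. F (g(a := x)))"
    by (simp add: sum.cartesian_product split_beta)
  finally show ?thesis .
qed

lemma cfgs_empty [simp]: "cfgs d {} = {\<lambda>_. undefined}"
  by (simp add: cfgs_def)

lemma UNIV_sys: "(UNIV :: sys set) = {Ap1, Ap2, A1, A2, At, B}"
  using sys.exhaust by auto

lemma finite_cfgs: "finite (cfgs d S)"
proof -
  have "finite (UNIV :: sys set)"
    by (simp add: UNIV_sys)
  then have "finite S"
    by (rule finite_subset[OF subset_UNIV])
  then show ?thesis
    by (simp add: cfgs_def finite_PiE)
qed

lemma if_zero_mult_left: "(if P then a else 0) * b = (if P then a * b else (0 :: 'a :: mult_zero))"
  by simp

lemma if_zero_mult_right: "b * (if P then a else 0) = (if P then b * a else (0 :: 'a :: mult_zero))"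
  by simp

lemma if_zero_divide: "(if P then a else 0) / b = (if P then a / b else (0 :: 'a :: field))"
  by simp

lemma if_zero_conj: "(if P \<and> Q then a else 0) = (if P then if Q then a else 0 else (0 :: 'a :: zero))"
  by simp

lemma sum_if_zero: "(\<Sum>x\<in>S. if P then F x else 0) = (if P then (\<Sum>x\<in>S. F x) else (0 :: 'a :: comm_monoid_add))"
  by simp

lemma sum_lessThan_delta:
  "(\<Sum>x<d. if x = a then F x else 0) = (if a < d then F a else (0 :: 'a :: comm_monoid_add))"
  "(\<Sum>x<d. if a = x then F x else 0) = (if a < d then F a else (0 :: 'a :: comm_monoid_add))"
  for d :: nat
  by (simp_all add: sum.delta sum.delta')

lemmas if_zero_simps = if_distrib[of cnj] if_zero_divide if_zero_mult_left if_zero_mult_right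
  if_zero_conj sum_if_zero sum_lessThan_delta

definition cfg_B :: "nat \<Rightarrow> sys \<Rightarrow> nat" where
  "cfg_B b = restrict (\<lambda>_. b) {B}"

definition cfg_AtB :: "nat \<Rightarrow> nat \<Rightarrow> sys \<Rightarrow> nat" where
  "cfg_AtB t b = restrict (\<lambda>x. if x = At then t else b) {At, B}"

definition cfg_A1A2At :: "nat \<Rightarrow> nat \<Rightarrow> nat \<Rightarrow> sys \<Rightarrow> nat" where
  "cfg_A1A2At a1 a2 t = restrict (\<lambda>x. if x = A1 then a1 else if x = A2 then a2 else t) {A1, A2, At}"

lemma restrict_B: "restrict f {B} = cfg_B (f B)"
  by (auto simp: cfg_B_def restrict_def fun_eq_iff)

lemma restrict_AtB: "restrict f {At, B} = cfg_AtB (f At) (f B)"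
  by (auto simp: cfg_AtB_def restrict_def fun_eq_iff)

lemma restrict_A1A2At: "restrict f {A1, A2, At} = cfg_A1A2At (f A1) (f A2) (f At)"
  by (auto simp: cfg_A1A2At_def restrict_def fun_eq_iff)

lemma restrict_eq_restrict_iff: "restrict f S = restrict g S \<longleftrightarrow> (\<forall>x\<in>S. f x = g x)"
  by (auto simp: restrict_def fun_eq_iff)

lemma cfg_B_in_cfgs: "b < d \<Longrightarrow> cfg_B b \<in> cfgs d {B}"
  by (auto simp: cfg_B_def cfgs_def)

lemma cfg_AtB_in_cfgs: "t < d \<Longrightarrow> b < d \<Longrightarrow> cfg_AtB t b \<in> cfgs d {At, B}"
  by (auto simp: cfg_AtB_def cfgs_def)

lemma cfg_A1A2At_in_cfgs: "a1 < d \<Longrightarrow> a2 < d \<Longrightarrow> t < d \<Longrightarrow> cfg_A1A2At a1 a2 t \<in> cfgs d {A1, A2, At}"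
  by (auto simp: cfg_A1A2At_def cfgs_def)

lemma cfg_B_eq_iff: "cfg_B b = cfg_B b' \<longleftrightarrow> b = b'"
  by (auto simp: cfg_B_def restrict_def fun_eq_iff)

lemma cfg_A1A2At_eq_iff: "cfg_A1A2At a1 a2 t = cfg_A1A2At a1' a2' t' \<longleftrightarrow> a1 = a1' \<and> a2 = a2' \<and> t = t'"
  by (auto simp: cfg_A1A2At_def restrict_def fun_eq_iff)

lemma fun_upd_undefined_B: "(\<lambda>_. undefined)(B := b) = cfg_B b"
  by (auto simp: cfg_B_def restrict_def fun_eq_iff)

lemma fun_upd_undefined_AtB: "(\<lambda>_. undefined)(B := b, At := t) = cfg_AtB t b"
  by (auto simp: cfg_AtB_def restrict_def fun_eq_iff)

lemma measured_Omega_entry: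
  "mult d UNIV (tensor {A1, A2, At} {Ap1, Ap2, B} Mi ident) (Omega d \<rho>) f g =
    (if f Ap1 < d \<and> f Ap2 < d \<and> f B < d \<and> g Ap1 = g A1 \<and> g Ap2 = g A2
     then 1 / (of_nat d)\<^sup>2 * (\<Sum>t<d. Mi (cfg_A1A2At (f A1) (f A2) (f At)) (cfg_A1A2At (f Ap1) (f Ap2) t)
       * \<rho> (cfg_AtB t (f B)) (cfg_AtB (g At) (g B)))
     else 0)"
  unfolding mult_def UNIV_sys
  by (simp add: sum_cfgs_insert tensor_def ident_def Omega_def psi_plus_def restrict_AtB restrict_A1A2At
      restrict_eq_restrict_iff fun_upd_apply)
    (simp add: if_zero_simps sum_divide_distrib power2_eq_square cong: if_cong)

lemma reduced_1_entry:
  assumes "f Ap1 < d" "g Ap1 < d" "f B < d"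
  shows "reduced d \<rho> Mi 1 f g = 1 / (of_nat d)\<^sup>2 * (\<Sum>x<d. \<Sum>s<d. \<Sum>t<d.
     Mi (cfg_A1A2At (g Ap1) x s) (cfg_A1A2At (f Ap1) x t) * \<rho> (cfg_AtB t (f B)) (cfg_AtB s (g B)))"
  unfolding reduced_def ptrace_def Aprime_bar_def
  by (simp add: sum_cfgs_insert fun_upd_apply measured_Omega_entry)
    (simp add: if_zero_simps assms sum_divide_distrib power2_eq_square cong: if_cong)

lemma reduced_2_entry:
  assumes "f Ap2 < d" "g Ap2 < d" "f B < d"
  shows "reduced d \<rho> Mi 2 f g = 1 / (of_nat d)\<^sup>2 * (\<Sum>x<d. \<Sum>s<d. \<Sum>t<d.
     Mi (cfg_A1A2At x (g Ap2) s) (cfg_A1A2At x (f Ap2) t) * \<rho> (cfg_AtB t (f B)) (cfg_AtB s (g B)))"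
  unfolding reduced_def ptrace_def Aprime_bar_def
  by (simp add: sum_cfgs_insert fun_upd_apply measured_Omega_entry)
    (simp add: if_zero_simps assms sum_divide_distrib power2_eq_square cong: if_cong)

lemma sum_move_out_fifth:
  "(\<Sum>k\<in>I1. \<Sum>l\<in>I2. \<Sum>m\<in>I3. \<Sum>n\<in>I4. \<Sum>x\<in>I5. F k l m n x)
    = (\<Sum>x\<in>I5. \<Sum>k\<in>I1. \<Sum>l\<in>I2. \<Sum>m\<in>I3. \<Sum>n\<in>I4. F k l m n x)"
  by (rule trans[OF _ sum.swap], rule sum.cong[OF refl],
      rule trans[OF _ sum.swap], rule sum.cong[OF refl],
      rule trans[OF _ sum.swap], rule sum.cong[OF refl], rule sum.swap)

text \<open>\<open>d\<^sup>3\<close> times the two guessing terms of \<open>P_succ\<close>; \<open>x\<close> runs over the input that is not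
  guessed, \<open>k, l\<close> over the guessed one.\<close>
definition fidelity_sum_1 :: "nat \<Rightarrow> qop \<Rightarrow> qop \<Rightarrow> qop \<Rightarrow> complex" where
  "fidelity_sum_1 d Mi \<rho> V = (\<Sum>x<d. \<Sum>k<d. \<Sum>l<d. \<Sum>b'<d. \<Sum>b<d. \<Sum>s<d. \<Sum>t<d.
     V (cfg_B l) (cfg_B b) * cnj (V (cfg_B k) (cfg_B b')) * Mi (cfg_A1A2At k x s) (cfg_A1A2At l x t)
       * \<rho> (cfg_AtB t b) (cfg_AtB s b'))"

definition fidelity_sum_2 :: "nat \<Rightarrow> qop \<Rightarrow> qop \<Rightarrow> qop \<Rightarrow> complex" where
  "fidelity_sum_2 d Mi \<rho> V = (\<Sum>x<d. \<Sum>k<d. \<Sum>l<d. \<Sum>b'<d. \<Sum>b<d. \<Sum>s<d. \<Sum>t<d.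
     V (cfg_B l) (cfg_B b) * cnj (V (cfg_B k) (cfg_B b')) * Mi (cfg_A1A2At x k s) (cfg_A1A2At x l t)
       * \<rho> (cfg_AtB t b) (cfg_AtB s b'))"

text \<open>\<open>d\<^sup>2\<close> times the probability of the measurement outcome.\<close>
definition outcome_sum :: "nat \<Rightarrow> qop \<Rightarrow> qop \<Rightarrow> complex" where
  "outcome_sum d Mi \<rho> = (\<Sum>a1<d. \<Sum>a2<d. \<Sum>b<d. \<Sum>s<d. \<Sum>t<d.
     Mi (cfg_A1A2At a1 a2 s) (cfg_A1A2At a1 a2 t) * \<rho> (cfg_AtB t b) (cfg_AtB s b))"

lemma fidelity_term_1:
  "(let S = {Aprime 1, B}; UB = tensor {Aprime 1} {B} ident V in
    qtrace d S (mult d S (psi_plus d (Aprime 1) B) (mult d S (mult d S UB (reduced d \<rho> Mi 1)) (adj UB))))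
   = 1 / (of_nat d)^3 * fidelity_sum_1 d Mi \<rho> V"
proof -
  have "fidelity_sum_1 d Mi \<rho> V = (\<Sum>k<d. \<Sum>l<d. \<Sum>b'<d. \<Sum>b<d. \<Sum>x<d. \<Sum>s<d. \<Sum>t<d.
     V (cfg_B l) (cfg_B b) * cnj (V (cfg_B k) (cfg_B b')) * Mi (cfg_A1A2At k x s) (cfg_A1A2At l x t)
       * \<rho> (cfg_AtB t b) (cfg_AtB s b'))"
    unfolding fidelity_sum_1_def by (rule sum_move_out_fifth[symmetric])
  then show ?thesis
    unfolding Let_def Aprime_def qtrace_def mult_def adj_def
    by (simp add: sum_cfgs_insert fun_upd_apply tensor_def psi_plus_def ident_def
        restrict_eq_restrict_iff restrict_B)
      (simp add: if_zero_simps reduced_1_entry[unfolded One_nat_def] sum_divide_distrib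
        sum_distrib_left sum_distrib_right mult_ac power2_eq_square power3_eq_cube cong: if_cong)
qed

lemma fidelity_term_2:
  "(let S = {Aprime 2, B}; UB = tensor {Aprime 2} {B} ident V in
    qtrace d S (mult d S (psi_plus d (Aprime 2) B) (mult d S (mult d S UB (reduced d \<rho> Mi 2)) (adj UB))))
   = 1 / (of_nat d)^3 * fidelity_sum_2 d Mi \<rho> V"
proof -
  have "fidelity_sum_2 d Mi \<rho> V = (\<Sum>k<d. \<Sum>l<d. \<Sum>b'<d. \<Sum>b<d. \<Sum>x<d. \<Sum>s<d. \<Sum>t<d.
     V (cfg_B l) (cfg_B b) * cnj (V (cfg_B k) (cfg_B b')) * Mi (cfg_A1A2At x k s) (cfg_A1A2At x l t)
       * \<rho> (cfg_AtB t b) (cfg_AtB s b'))"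
    unfolding fidelity_sum_2_def by (rule sum_move_out_fifth[symmetric])
  then show ?thesis
    unfolding Let_def Aprime_def qtrace_def mult_def adj_def
    by (simp add: sum_cfgs_insert fun_upd_apply tensor_def psi_plus_def ident_def
        restrict_eq_restrict_iff restrict_B)
      (simp add: if_zero_simps reduced_2_entry sum_divide_distrib
        sum_distrib_left sum_distrib_right mult_ac power2_eq_square power3_eq_cube cong: if_cong)
qed

lemma unitary_op_B_rows:
  assumes "unitary_op d {B} V" "k < d" "l < d"
  shows "(\<Sum>b<d. V (cfg_B k) (cfg_B b) * cnj (V (cfg_B l) (cfg_B b))) = (if k = l then 1 else 0)"
proof -
  have "mult d {B} V (adj V) (cfg_B k) (cfg_B l) = ident (cfg_B k) (cfg_B l)"
    using assms by (auto simp: unitary_op_def intro: cfg_B_in_cfgs)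
  then show ?thesis
    by (simp add: mult_def adj_def ident_def sum_cfgs_insert[where S="{}", simplified]
        fun_upd_undefined_B cfg_B_eq_iff)
qed

lemma unitary_op_B_cols:
  assumes "unitary_op d {B} V" "k < d" "l < d"
  shows "(\<Sum>x<d. cnj (V (cfg_B x) (cfg_B k)) * V (cfg_B x) (cfg_B l)) = (if k = l then 1 else 0)"
proof -
  have "mult d {B} (adj V) V (cfg_B k) (cfg_B l) = ident (cfg_B k) (cfg_B l)"
    using assms by (auto simp: unitary_op_def intro: cfg_B_in_cfgs)
  then show ?thesis
    by (simp add: mult_def adj_def ident_def sum_cfgs_insert[where S="{}", simplified]
        fun_upd_undefined_B cfg_B_eq_iff)
qed


text \<open>\<open>(\<langle>u| \<otimes> 1)|\<phi>\<rangle>\<close>, contracted over \<open>At\<close>: an unnormalised post-measurement vector on \<open>A1 A2 B\<close>.\<close>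
definition post_vec :: "nat \<Rightarrow> ((sys \<Rightarrow> nat) \<Rightarrow> complex) \<Rightarrow> ((sys \<Rightarrow> nat) \<Rightarrow> complex)
    \<Rightarrow> nat \<Rightarrow> nat \<Rightarrow> nat \<Rightarrow> complex" where
  "post_vec d u \<phi> a1 a2 b = (\<Sum>t<d. cnj (u (cfg_A1A2At a1 a2 t)) * \<phi> (cfg_AtB t b))"

lemma fidelity_sum_1_gram:
  assumes M: "\<And>f g. f \<in> cfgs d {A1, A2, At} \<Longrightarrow> g \<in> cfgs d {A1, A2, At}
      \<Longrightarrow> Mi f g = (\<Sum>n<NM. u n f * cnj (u n g))"
    and R: "\<And>f g. f \<in> cfgs d {At, B} \<Longrightarrow> g \<in> cfgs d {At, B}
      \<Longrightarrow> \<rho> f g = (\<Sum>m<NR. \<phi> m f * cnj (\<phi> m g))"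
  shows "fidelity_sum_1 d Mi \<rho> V = of_real (\<Sum>n<NM. \<Sum>m<NR. \<Sum>x<d.
    (cmod (\<Sum>l<d. \<Sum>b<d. V (cfg_B l) (cfg_B b) * post_vec d (u n) (\<phi> m) l x b))\<^sup>2)"
proof -
  have "fidelity_sum_1 d Mi \<rho> V = (\<Sum>x<d. \<Sum>k<d. \<Sum>l<d. \<Sum>b'<d. \<Sum>b<d. \<Sum>s<d. \<Sum>t<d. \<Sum>n<NM. \<Sum>m<NR.
      V (cfg_B l) (cfg_B b) * cnj (V (cfg_B k) (cfg_B b')) * (u n (cfg_A1A2At k x s) * cnj (u n (cfg_A1A2At l x t)))
        * (\<phi> m (cfg_AtB t b) * cnj (\<phi> m (cfg_AtB s b'))))"
    unfolding fidelity_sum_1_def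
    by (simp add: M R cfg_A1A2At_in_cfgs cfg_AtB_in_cfgs sum_distrib_left sum_distrib_right mult_ac)
  text \<open>Instantiating \<open>sum.swap\<close> with the index set to be moved outwards makes the rewriting
    terminate.\<close>
  also have "\<dots> = (\<Sum>n<NM. \<Sum>m<NR. \<Sum>x<d. \<Sum>k<d. \<Sum>l<d. \<Sum>b'<d. \<Sum>b<d. \<Sum>s<d. \<Sum>t<d.
      V (cfg_B l) (cfg_B b) * cnj (V (cfg_B k) (cfg_B b')) * (u n (cfg_A1A2At k x s) * cnj (u n (cfg_A1A2At l x t)))
        * (\<phi> m (cfg_AtB t b) * cnj (\<phi> m (cfg_AtB s b'))))"
    by (simp only: sum.swap[of _ _ "{..<NR}"]) (simp only: sum.swap[of _ _ "{..<NM}"])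
  also have "\<dots> = of_real (\<Sum>n<NM. \<Sum>m<NR. \<Sum>x<d.
    (cmod (\<Sum>l<d. \<Sum>b<d. V (cfg_B l) (cfg_B b) * post_vec d (u n) (\<phi> m) l x b))\<^sup>2)"
    unfolding of_real_sum complex_norm_square
    by (simp add: post_vec_def sum_distrib_left sum_distrib_right cnj_sum mult_ac)
  finally show ?thesis .
qed

lemma fidelity_sum_2_gram:
  assumes M: "\<And>f g. f \<in> cfgs d {A1, A2, At} \<Longrightarrow> g \<in> cfgs d {A1, A2, At}
      \<Longrightarrow> Mi f g = (\<Sum>n<NM. u n f * cnj (u n g))"
    and R: "\<And>f g. f \<in> cfgs d {At, B} \<Longrightarrow> g \<in> cfgs d {At, B}
      \<Longrightarrow> \<rho> f g = (\<Sum>m<NR. \<phi> m f * cnj (\<phi> m g))"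
  shows "fidelity_sum_2 d Mi \<rho> V = of_real (\<Sum>n<NM. \<Sum>m<NR. \<Sum>x<d.
    (cmod (\<Sum>l<d. \<Sum>b<d. V (cfg_B l) (cfg_B b) * post_vec d (u n) (\<phi> m) x l b))\<^sup>2)"
proof -
  have "fidelity_sum_2 d Mi \<rho> V = (\<Sum>x<d. \<Sum>k<d. \<Sum>l<d. \<Sum>b'<d. \<Sum>b<d. \<Sum>s<d. \<Sum>t<d. \<Sum>n<NM. \<Sum>m<NR.
      V (cfg_B l) (cfg_B b) * cnj (V (cfg_B k) (cfg_B b')) * (u n (cfg_A1A2At x k s) * cnj (u n (cfg_A1A2At x l t)))
        * (\<phi> m (cfg_AtB t b) * cnj (\<phi> m (cfg_AtB s b'))))"
    unfolding fidelity_sum_2_def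
    by (simp add: M R cfg_A1A2At_in_cfgs cfg_AtB_in_cfgs sum_distrib_left sum_distrib_right mult_ac)
  also have "\<dots> = (\<Sum>n<NM. \<Sum>m<NR. \<Sum>x<d. \<Sum>k<d. \<Sum>l<d. \<Sum>b'<d. \<Sum>b<d. \<Sum>s<d. \<Sum>t<d.
      V (cfg_B l) (cfg_B b) * cnj (V (cfg_B k) (cfg_B b')) * (u n (cfg_A1A2At x k s) * cnj (u n (cfg_A1A2At x l t)))
        * (\<phi> m (cfg_AtB t b) * cnj (\<phi> m (cfg_AtB s b'))))"
    by (simp only: sum.swap[of _ _ "{..<NR}"]) (simp only: sum.swap[of _ _ "{..<NM}"])
  also have "\<dots> = of_real (\<Sum>n<NM. \<Sum>m<NR. \<Sum>x<d.
    (cmod (\<Sum>l<d. \<Sum>b<d. V (cfg_B l) (cfg_B b) * post_vec d (u n) (\<phi> m) x l b))\<^sup>2)"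
    unfolding of_real_sum complex_norm_square
    by (simp add: post_vec_def sum_distrib_left sum_distrib_right cnj_sum mult_ac)
  finally show ?thesis .
qed

lemma outcome_sum_gram:
  assumes M: "\<And>f g. f \<in> cfgs d {A1, A2, At} \<Longrightarrow> g \<in> cfgs d {A1, A2, At}
      \<Longrightarrow> Mi f g = (\<Sum>n<NM. u n f * cnj (u n g))"
    and R: "\<And>f g. f \<in> cfgs d {At, B} \<Longrightarrow> g \<in> cfgs d {At, B}
      \<Longrightarrow> \<rho> f g = (\<Sum>m<NR. \<phi> m f * cnj (\<phi> m g))"
  shows "outcome_sum d Mi \<rho> = of_real (\<Sum>n<NM. \<Sum>m<NR. \<Sum>a1<d. \<Sum>a2<d. \<Sum>b<d.
    (cmod (post_vec d (u n) (\<phi> m) a1 a2 b))\<^sup>2)"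
proof -
  have "outcome_sum d Mi \<rho> = (\<Sum>a1<d. \<Sum>a2<d. \<Sum>b<d. \<Sum>s<d. \<Sum>t<d. \<Sum>n<NM. \<Sum>m<NR.
      (u n (cfg_A1A2At a1 a2 s) * cnj (u n (cfg_A1A2At a1 a2 t))) * (\<phi> m (cfg_AtB t b) * cnj (\<phi> m (cfg_AtB s b))))"
    unfolding outcome_sum_def
    by (simp add: M R cfg_A1A2At_in_cfgs cfg_AtB_in_cfgs sum_distrib_left sum_distrib_right mult_ac)
  also have "\<dots> = (\<Sum>n<NM. \<Sum>m<NR. \<Sum>a1<d. \<Sum>a2<d. \<Sum>b<d. \<Sum>s<d. \<Sum>t<d.
      (u n (cfg_A1A2At a1 a2 s) * cnj (u n (cfg_A1A2At a1 a2 t))) * (\<phi> m (cfg_AtB t b) * cnj (\<phi> m (cfg_AtB s b))))"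
    by (simp only: sum.swap[of _ _ "{..<NR}"]) (simp only: sum.swap[of _ _ "{..<NM}"])
  also have "\<dots> = of_real (\<Sum>n<NM. \<Sum>m<NR. \<Sum>a1<d. \<Sum>a2<d. \<Sum>b<d.
    (cmod (post_vec d (u n) (\<phi> m) a1 a2 b))\<^sup>2)"
    unfolding of_real_sum complex_norm_square
    by (simp add: post_vec_def sum_distrib_left sum_distrib_right cnj_sum mult_ac)
  finally show ?thesis .
qed

lemma fidelity_sums_le:
  assumes "positive d {A1, A2, At} Mi" "positive d {At, B} \<rho>"
    and "unitary_op d {B} V1" "unitary_op d {B} V2"
  shows "fidelity_sum_1 d Mi \<rho> V1 + fidelity_sum_2 d Mi \<rho> V2 \<le> (of_nat d + 1) * outcome_sum d Mi \<rho>"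
proof -
  have "psd_on (cfgs d {A1, A2, At}) Mi" "psd_on (cfgs d {At, B}) \<rho>"
    using assms(1,2) by (simp_all add: positive_iff_psd_on)
  obtain Wm and NM :: nat where Wm: "\<And>f g. f \<in> cfgs d {A1, A2, At} \<Longrightarrow> g \<in> cfgs d {A1, A2, At}
      \<Longrightarrow> Mi f g = (\<Sum>n<NM. Wm n f * cnj (Wm n g))"
    using psd_on_gram_decomposition[OF finite_cfgs \<open>psd_on (cfgs d {A1, A2, At}) Mi\<close>] by metis
  obtain Ph and NR :: nat where Ph: "\<And>f g. f \<in> cfgs d {At, B} \<Longrightarrow> g \<in> cfgs d {At, B}
      \<Longrightarrow> \<rho> f g = (\<Sum>m<NR. Ph m f * cnj (Ph m g))"
    using psd_on_gram_decomposition[OF finite_cfgs \<open>psd_on (cfgs d {At, B}) \<rho>\<close>] by metis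
  define c where "c n m = post_vec d (Wm n) (Ph m)" for n m
  have overlaps: "(\<Sum>x<d. (cmod (\<Sum>l<d. \<Sum>b<d. V1 (cfg_B l) (cfg_B b) * c n m l x b))\<^sup>2)
      + (\<Sum>x<d. (cmod (\<Sum>l<d. \<Sum>b<d. V2 (cfg_B l) (cfg_B b) * c n m x l b))\<^sup>2)
    \<le> (real d + 1) * (\<Sum>a1<d. \<Sum>a2<d. \<Sum>b<d. (cmod (c n m a1 a2 b))\<^sup>2)" for n m
    by (rule entangled_overlaps_le)
      (simp_all add: unitary_op_B_rows[OF assms(3)] unitary_op_B_cols[OF assms(4)])
  have "(\<Sum>n<NM. \<Sum>m<NR. (\<Sum>x<d. (cmod (\<Sum>l<d. \<Sum>b<d. V1 (cfg_B l) (cfg_B b) * c n m l x b))\<^sup>2)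
      + (\<Sum>x<d. (cmod (\<Sum>l<d. \<Sum>b<d. V2 (cfg_B l) (cfg_B b) * c n m x l b))\<^sup>2))
    \<le> (\<Sum>n<NM. \<Sum>m<NR. (real d + 1) * (\<Sum>a1<d. \<Sum>a2<d. \<Sum>b<d. (cmod (c n m a1 a2 b))\<^sup>2))"
    by (intro sum_mono overlaps)
  then show ?thesis
    unfolding c_def
    by (simp only: fidelity_sum_1_gram[OF Wm Ph] fidelity_sum_2_gram[OF Wm Ph] outcome_sum_gram[OF Wm Ph])
      (simp add: less_eq_complex_def sum.distrib sum_distrib_left)
qed

lemma P_succ_eq_fidelity_sums:
  "P_succ d \<rho> K M U = 1 / 2 * (\<Sum>i=1..K.
     (fidelity_sum_1 d (M i) \<rho> (U i 1) + fidelity_sum_2 d (M i) \<rho> (U i 2)) / (of_nat d)^3)"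
  unfolding P_succ_def
  by (simp add: fidelity_term_1[unfolded One_nat_def] fidelity_term_2 sum.distrib add_divide_distrib)

lemma sum_outcome_sum:
  assumes "povm d {A1, A2, At} K M" "density d {At, B} \<rho>"
  shows "(\<Sum>i=1..K. outcome_sum d (M i) \<rho>) = (of_nat d)\<^sup>2"
proof -
  have complete: "(\<Sum>i=1..K. M i (cfg_A1A2At a1 a2 s) (cfg_A1A2At a1 a2 t)) = (if s = t then 1 else 0)"
    if "a1 < d" "a2 < d" "s < d" "t < d" for a1 a2 s t
    using assms(1) that cfg_A1A2At_in_cfgs by (simp add: povm_def ident_def cfg_A1A2At_eq_iff)
  have trace: "(\<Sum>b<d. \<Sum>s<d. \<rho> (cfg_AtB s b) (cfg_AtB s b)) = 1"
    using assms(2) by (subst sum.swap) (simp add: density_def qtrace_def sum_cfgs_insert fun_upd_undefined_AtB)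
  have "(\<Sum>i=1..K. outcome_sum d (M i) \<rho>) = (\<Sum>a1<d. \<Sum>a2<d. \<Sum>b<d. \<Sum>s<d. \<Sum>t<d.
      (\<Sum>i=1..K. M i (cfg_A1A2At a1 a2 s) (cfg_A1A2At a1 a2 t)) * \<rho> (cfg_AtB t b) (cfg_AtB s b))"
    unfolding outcome_sum_def
    by (simp only: sum.swap[of _ "{1..K}"] sum_distrib_right)
  also have "\<dots> = (\<Sum>a1<d. \<Sum>a2<d. \<Sum>b<d. \<Sum>s<d. \<rho> (cfg_AtB s b) (cfg_AtB s b))"
    by (simp add: complete[unfolded One_nat_def] if_zero_simps cong: if_cong)
  also have "\<dots> = (of_nat d)\<^sup>2"
    by (simp add: trace power2_eq_square)
  finally show ?thesis .
qed

theorem proposition2: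
  fixes d K :: nat and \<rho> :: qop and M :: "nat \<Rightarrow> qop" and U :: "nat \<Rightarrow> nat \<Rightarrow> qop"
  assumes "d \<ge> 2"
    and "density d {At, B} \<rho>"
    and "K \<ge> 1"
    and "povm d {A1, A2, At} K M"
    and "\<forall>i\<in>{1..K}. \<forall>j\<in>{1,2}. unitary_op d {B} (U i j)"
  shows "P_succ d \<rho> K M U \<le> complex_of_real ((real d + 1) / (2 * real d))"
proof -
  have "(\<Sum>i=1..K. fidelity_sum_1 d (M i) \<rho> (U i 1) + fidelity_sum_2 d (M i) \<rho> (U i 2))
      \<le> (\<Sum>i=1..K. (of_nat d + 1) * outcome_sum d (M i) \<rho>)"
    using assms(2,4,5) by (intro sum_mono fidelity_sums_le) (auto simp: povm_def density_def)
  also have "\<dots> = (of_nat d + 1) * (\<Sum>i=1..K. outcome_sum d (M i) \<rho>)"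
    by (simp add: sum_distrib_left)
  also have "\<dots> = (of_nat d + 1) * (of_nat d)\<^sup>2"
    by (simp only: sum_outcome_sum[OF assms(4,2)])
  finally have "P_succ d \<rho> K M U \<le> 1 / 2 * ((of_nat d + 1) * (of_nat d)\<^sup>2 / (of_nat d)^3)"
    unfolding P_succ_eq_fidelity_sums sum_divide_distrib[symmetric]
    by (intro mult_left_mono) (auto simp: less_eq_complex_def intro: divide_right_mono)
  also have "\<dots> = complex_of_real ((real d + 1) / (2 * real d))"
    using assms(1) by (simp add: field_simps power2_eq_square power3_eq_cube)
  finally show ?thesis .
qed

end
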